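(* Let $\rho\in(0,1)$, let $N_1,N_2$ be positive integers, $n=N_1+N_2$, and let $X_0(1)>X_0(2)>\cdots>X_0(n)$ be integers. Put $Y^{(1)}=(X_0(1),\dots,X_0(N_1))$, $Y^{(2)}=(X_0(N_1+1),\dots,X_0(N_1+N_2))$ and $X=(X_0(1),\dots,X_0(n))$. Then for every $0\le k\le N_1-1$ and every $z\in\mathbb{Z}$, $$h^{n,X}_{k+N_2}(0,z)=\sum_{z_3\in\mathbb{Z}}\big(Q^{N_2}(z_3,z)-G^{Y^{(2)}}_{0,N_2}(z_3,z)\big)\,h^{N_1,Y^{(1)}}_k(0,z_3).$$
   Context: $Q(x,y)=(1-\rho)^{x-y-1}\rho\,\mathbf{1}_{x>y}$ on $\mathbb{Z}\times\mathbb{Z}$, $Q^m$ its $m$-th matrix power. For $f:\mathbb{Z}\to\mathbb{R}$ let $(Q^* )^{-1}f(z)=\frac1\rho f(z-1)-\frac{1-\rho}{\rho}f(z)$. For $m\ge1$, integers $Y(1)>\cdots>Y(m)$, and $0\le k<m$, $h^{m,Y}_k(l,z)$ ($0\le l\le k$, $z\in\mathbb{Z}$) is the unique solution of: $(Q^* )^{-1}h^{m,Y}_k(l,\cdot)(z)=h^{m,Y}_k(l+1,z)$ for $l<k$; $h^{m,Y}_k(k,z)=\rho(1-\rho)^{Y(m-k)-z-1}$; $h^{m,Y}_k(l,Y(m-l))=0$ for $l<k$. Further $G^{Y}_{0,m}(z_1,z_2)=\sum_{k=0}^{m-1}\frac{1-\rho}{\rho}Q^{m-k}(z_1,Y(m-k))\,h^{m,Y}_k(0,z_2)$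 for $z_1,z_2\in\mathbb{Z}$. *)

theory Defs
  imports "HOL-Analysis.Analysis"
begin

definition Qk :: "real \<Rightarrow> int \<Rightarrow> int \<Rightarrow> real" where
  "Qk \<rho> x y = (if x > y then \<rho> * (1 - \<rho>) ^ nat (x - y - 1) else 0)"

fun Qpow :: "real \<Rightarrow> nat \<Rightarrow> int \<Rightarrow> int \<Rightarrow> real" where
  "Qpow \<rho> 0 x y = (if x = y then 1 else 0)"
| "Qpow \<rho> (Suc m) x y = (\<Sum>\<^sub>\<infinity>w\<in>(UNIV::int set). Qk \<rho> x w * Qpow \<rho> m w y)"

definition invQstar :: "real \<Rightarrow> (int \<Rightarrow> real) \<Rightarrow> int \<Rightarrow> real" where
  "invQstar \<rho> f z = f (z - 1) / \<rho> - (1 - \<rho>) / \<rho> * f z"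

text \<open>h^{m,Y}_k(l,z) for 0 <= l <= k: the unique solution of the stated system
  (sequences Y are 1-indexed: Y(1) > ... > Y(m)). Values for l > k are normalised to 0
  so that the description singles out one function.\<close>
definition hfun :: "real \<Rightarrow> nat \<Rightarrow> (nat \<Rightarrow> int) \<Rightarrow> nat \<Rightarrow> nat \<Rightarrow> int \<Rightarrow> real" where
  "hfun \<rho> m Y k = (THE h :: nat \<Rightarrow> int \<Rightarrow> real.
      (\<forall>l z. k < l \<longrightarrow> h l z = 0)
    \<and> (\<forall>l z. l < k \<longrightarrow> invQstar \<rho> (h l) z = h (Suc l) z)
    \<and> (\<forall>z. h k z = \<rho> * (1 - \<rho>) powi (Y (m - k) - z - 1))
    \<and> (\<forall>l. l < k \<longrightarrow> h l (Y (m - l)) = 0))"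

definition Gfun :: "real \<Rightarrow> (nat \<Rightarrow> int) \<Rightarrow> nat \<Rightarrow> int \<Rightarrow> int \<Rightarrow> real" where
  "Gfun \<rho> Y m z1 z2 = (\<Sum>k<m. (1 - \<rho>) / \<rho> * Qpow \<rho> (m - k) z1 (Y (m - k)) * hfun \<rho> m Y k 0 z2)"

end

theory Submission
  imports Defs
begin

text \<open>Every f has a unique preimage g under (Q^*)^{-1} with g(a) = 0 for a prescribed anchor a;
  call it T_a f. The system defining h^{m,Y}_k therefore says
  h^{m,Y}_k(0,.) = T_{Y(m)} ... T_{Y(m-k+1)} Q(Y(m-k),.), where Q(a,.) is continued past the
  diagonal by its geometric formula. For X the concatenation of Y^(1) and Y^(2), the chain for
  h^{n,X}_{k+N_2}(0,.) is the chain T_{Y^(2)(N_2)} ... T_{Y^(2)(1)} applied to h^{N_1,Y^(1)}_k(0,.).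
  It remains to identify the matrix of T_{Y(m)} ... T_{Y(1)} with Q^m - G^Y_{0,m}, which is an
  induction on m driven by T_a delta_w = Q(w,.) - (1-rho)/rho Q(w,a) Q(a,.). The matrix is finitely
  supported in its first variable, so the sum in the theorem is a finite one.\<close>

definition Qext :: "real \<Rightarrow> int \<Rightarrow> int \<Rightarrow> real" where
  "Qext \<rho> a z = \<rho> * (1 - \<rho>) powi (a - z - 1)"

text \<open>This is T_a: (Q^*)^{-1} g = f is the recursion g(z-1) = rho f(z) + (1-rho) g(z),
  unrolled from g(a) = 0 in both directions.\<close>
definition invQstar_solve :: "real \<Rightarrow> int \<Rightarrow> (int \<Rightarrow> real) \<Rightarrow> int \<Rightarrow> real" where
  "invQstar_solve \<rho> a f z =
     (\<Sum>w\<in>{z<..a}. \<rho> * (1 - \<rho>) powi (w - z - 1) * f w)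
   - (\<Sum>w\<in>{a<..z}. \<rho> * (1 - \<rho>) powi (w - z - 1) * f w)"

fun invQstar_solves :: "real \<Rightarrow> int list \<Rightarrow> (int \<Rightarrow> real) \<Rightarrow> int \<Rightarrow> real" where
  "invQstar_solves \<rho> [] f = f"
| "invQstar_solves \<rho> (a # as) f = invQstar_solve \<rho> a (invQstar_solves \<rho> as f)"

definition anchors :: "nat \<Rightarrow> (nat \<Rightarrow> int) \<Rightarrow> nat \<Rightarrow> int list" where
  "anchors m Y k = map (\<lambda>i. Y (m - i)) [0..<k]"

lemma finite_int_subset_interval:
  fixes A :: "int set"
  assumes "finite A"
  obtains R where "A \<subseteq> {-R..R}"
proof
  have "\<bar>a\<bar> \<le> Max (abs ` A)" if "a \<in> A" for a
    using assms that by simp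
  then show "A \<subseteq> {-Max (abs ` A)..Max (abs ` A)}"
    by (force simp: abs_le_iff)
qed

lemma invQstar_solve_anchor: "invQstar_solve \<rho> a f a = 0"
  by (simp add: invQstar_solve_def)

lemma invQstar_invQstar_solve:
  assumes "0 < \<rho>" "\<rho> < 1"
  shows "invQstar \<rho> (invQstar_solve \<rho> a f) z = f z"
proof -
  have shift: "(\<Sum>w\<in>S. \<rho> * (1 - \<rho>) powi (w - (z - 1) - 1) * f w)
             = (1 - \<rho>) * (\<Sum>w\<in>S. \<rho> * (1 - \<rho>) powi (w - z - 1) * f w)" for S
    unfolding sum_distrib_left
  proof (rule sum.cong[OF refl])
    fix w
    have "(1 - \<rho>) powi (w - z) = (1 - \<rho>) * (1 - \<rho>) powi (w - z - 1)"
      using power_int_add_1'[of "1 - \<rho>" "w - z - 1"] assms by simp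
    then show "\<rho> * (1 - \<rho>) powi (w - (z - 1) - 1) * f w
             = (1 - \<rho>) * (\<rho> * (1 - \<rho>) powi (w - z - 1) * f w)"
      by simp
  qed
  show ?thesis
  proof (cases "z \<le> a")
    case True
    then have "{z - 1<..a} = insert z {z<..a}" "{a<..z - 1} = {}" "{a<..z} = {}"
      by auto
    then have "invQstar_solve \<rho> a f (z - 1) = \<rho> * f z + (1 - \<rho>) * invQstar_solve \<rho> a f z"
      unfolding invQstar_solve_def shift using assms by (simp add: field_simps)
    then show ?thesis
      unfolding invQstar_def using assms by (simp add: field_simps)
  next
    case False
    then have "{a<..z} = insert z {a<..z - 1}" "{z - 1<..a} = {}" "{z<..a} = {}"
      by auto
    then have "invQstar_solve \<rho> a f (z - 1)
             = (1 - \<rho>) * invQstar_solve \<rho> a f z + \<rho> * f z"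
      unfolding invQstar_solve_def shift using assms
      by (simp add: power_int_minus field_simps)
    then show ?thesis
      unfolding invQstar_def using assms by (simp add: field_simps)
  qed
qed

lemma invQstar_eq_imp_eq:
  assumes "0 < \<rho>" "\<rho> < 1"
    and "\<And>z. invQstar \<rho> f z = invQstar \<rho> g z" and "f a = g a"
  shows "f = g"
proof
  fix i
  define d where "d z = f z - g z" for z
  have d_pred: "d (z - 1) = (1 - \<rho>) * d z" for z
    using assms(1) assms(3)[of z] unfolding invQstar_def d_def by (simp add: field_simps)
  have "d i = 0"
  proof (induction i rule: int_induct[where k = a])
    case base
    then show ?case using assms(4) by (simp add: d_def)
  next
    case (step1 i)
    then show ?case using d_pred[of "i + 1"] assms(2) by simp
  next
    case (step2 i)
    then show ?case using d_pred[of i] by simp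
  qed
  then show "f i = g i" by (simp add: d_def)
qed

lemma drop_anchors:
  "l < k \<Longrightarrow> drop l (anchors m Y k) = Y (m - l) # drop (Suc l) (anchors m Y k)"
  unfolding anchors_def drop_map drop_upt by (simp add: upt_conv_Cons)

lemma invQstar_solves_drop_anchors:
  assumes "0 < \<rho>" "\<rho> < 1" "l < k"
  shows "invQstar \<rho> (invQstar_solves \<rho> (drop l (anchors m Y k)) f) z
       = invQstar_solves \<rho> (drop (Suc l) (anchors m Y k)) f z"
  using assms by (simp add: drop_anchors invQstar_invQstar_solve)

lemma invQstar_solves_drop_anchors_anchor:
  "l < k \<Longrightarrow> invQstar_solves \<rho> (drop l (anchors m Y k)) f (Y (m - l)) = 0"
  by (simp add: drop_anchors invQstar_solve_anchor)

lemma hfun_eq: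
  assumes "0 < \<rho>" "\<rho> < 1"
  shows "hfun \<rho> m Y k = (\<lambda>l z. if l \<le> k
           then invQstar_solves \<rho> (drop l (anchors m Y k)) (Qext \<rho> (Y (m - k))) z else 0)"
    (is "_ = ?H")
proof -
  have H_step: "invQstar \<rho> (?H l) z = ?H (Suc l) z" if "l < k" for l z
    using that invQstar_solves_drop_anchors[OF assms] by simp
  have H_anchor: "?H l (Y (m - l)) = 0" if "l < k" for l
    using that invQstar_solves_drop_anchors_anchor by simp
  show ?thesis
    unfolding hfun_def
  proof (rule the_equality)
    show "(\<forall>l z. k < l \<longrightarrow> ?H l z = 0)
      \<and> (\<forall>l z. l < k \<longrightarrow> invQstar \<rho> (?H l) z = ?H (Suc l) z)
      \<and> (\<forall>z. ?H k z = \<rho> * (1 - \<rho>) powi (Y (m - k) - z - 1))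
      \<and> (\<forall>l. l < k \<longrightarrow> ?H l (Y (m - l)) = 0)"
      using H_step H_anchor by (auto simp: anchors_def Qext_def)
  next
    fix h assume h: "(\<forall>l z. k < l \<longrightarrow> h l z = 0)
      \<and> (\<forall>l z. l < k \<longrightarrow> invQstar \<rho> (h l) z = h (Suc l) z)
      \<and> (\<forall>z. h k z = \<rho> * (1 - \<rho>) powi (Y (m - k) - z - 1))
      \<and> (\<forall>l. l < k \<longrightarrow> h l (Y (m - l)) = 0)"
    have from_top: "h (k - j) = ?H (k - j)" if "j \<le> k" for j
      using that
    proof (induction j)
      case 0
      then show ?case using h by (auto simp: anchors_def Qext_def)
    next
      case (Suc j)
      define l where "l = k - Suc j"
      have l: "l < k" "Suc l = k - j" using Suc.prems by (auto simp: l_def)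
      have "h l = ?H l"
      proof (rule invQstar_eq_imp_eq[OF assms, where a = "Y (m - l)"])
        fix z
        have "invQstar \<rho> (h l) z = h (Suc l) z" using h l by blast
        also have "\<dots> = ?H (Suc l) z" using Suc l by simp
        finally show "invQstar \<rho> (h l) z = invQstar \<rho> (?H l) z"
          using H_step[OF l(1)] by simp
      qed (use h l H_anchor in auto)
      then show ?case by (simp add: l_def)
    qed
    show "h = ?H"
    proof (intro ext)
      fix l z
      show "h l z = ?H l z"
        using from_top[of "k - l"] h by (cases "l \<le> k") auto
    qed
  qed
qed

lemma hfun_0_eq:
  assumes "0 < \<rho>" "\<rho> < 1"
  shows "hfun \<rho> m Y k 0 = invQstar_solves \<rho> (anchors m Y k) (Qext \<rho> (Y (m - k)))"
  using hfun_eq[OF assms] by simp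

definition invQstar_solves_kernel :: "real \<Rightarrow> int list \<Rightarrow> int \<Rightarrow> int \<Rightarrow> real" where
  "invQstar_solves_kernel \<rho> as w z = invQstar_solves \<rho> as (\<lambda>v. if v = w then 1 else 0) z"

lemma invQstar_solves_append:
  "invQstar_solves \<rho> (as @ bs) f = invQstar_solves \<rho> as (invQstar_solves \<rho> bs f)"
  by (induction as) auto

lemma invQstar_solve_cong:
  assumes "\<And>v. v \<in> {-R..R} \<Longrightarrow> f v = g v" "a \<in> {-R..R}" "z \<in> {-R..R}"
  shows "invQstar_solve \<rho> a f z = invQstar_solve \<rho> a g z"
  unfolding invQstar_solve_def
  by (intro arg_cong2[where f = "(-)"] sum.cong refl) (use assms in auto)

lemma invQstar_solve_sum:
  "invQstar_solve \<rho> a (\<lambda>v. \<Sum>w\<in>S. c w * g w v) z = (\<Sum>w\<in>S. c w * invQstar_solve \<rho> a (g w) z)"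
proof -
  have swap: "(\<Sum>v\<in>A. d v * (\<Sum>w\<in>S. c w * g w v)) = (\<Sum>w\<in>S. c w * (\<Sum>v\<in>A. d v * g w v))"
    for A and d :: "int \<Rightarrow> real"
    unfolding sum_distrib_left by (subst sum.swap) (simp add: mult_ac)
  show ?thesis
    unfolding invQstar_solve_def swap by (simp add: sum_subtractf right_diff_distrib)
qed

lemma invQstar_solve_diff:
  "invQstar_solve \<rho> a (\<lambda>v. f v - c * g v) z = invQstar_solve \<rho> a f z - c * invQstar_solve \<rho> a g z"
  unfolding invQstar_solve_def
  by (simp add: sum_subtractf sum_distrib_left algebra_simps)

lemma invQstar_solves_diff:
  "invQstar_solves \<rho> as (\<lambda>v. f v - c * g v) z = invQstar_solves \<rho> as f z - c * invQstar_solves \<rho> as g z"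
proof (induction as arbitrary: z)
  case (Cons a as)
  have "invQstar_solves \<rho> as (\<lambda>v. f v - c * g v)
      = (\<lambda>v. invQstar_solves \<rho> as f v - c * invQstar_solves \<rho> as g v)"
    using Cons.IH by (rule ext)
  then show ?case by (simp add: invQstar_solve_diff)
qed simp

lemma invQstar_solves_eq_sum:
  assumes "set as \<subseteq> {-R..R}" "z \<in> {-R..R}"
  shows "invQstar_solves \<rho> as f z = (\<Sum>w\<in>{-R..R}. invQstar_solves_kernel \<rho> as w z * f w)"
  using assms
proof (induction as arbitrary: z)
  case Nil
  have "(\<Sum>w\<in>{-R..R}. invQstar_solves_kernel \<rho> [] w z * f w) = (\<Sum>w\<in>{-R..R}. if w = z then f w else 0)"
    by (rule sum.cong) (auto simp: invQstar_solves_kernel_def)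
  also have "\<dots> = f z" using Nil by simp
  finally show ?case by simp
next
  case (Cons a as)
  have "invQstar_solves \<rho> (a # as) f z
      = invQstar_solve \<rho> a (\<lambda>v. \<Sum>w\<in>{-R..R}. f w * invQstar_solves_kernel \<rho> as w v) z"
    by simp (rule invQstar_solve_cong[where R = R]; use Cons in \<open>auto simp: mult.commute\<close>)
  also have "\<dots> = (\<Sum>w\<in>{-R..R}. f w * invQstar_solve \<rho> a (invQstar_solves_kernel \<rho> as w) z)"
    by (rule invQstar_solve_sum)
  also have "\<dots> = (\<Sum>w\<in>{-R..R}. invQstar_solves_kernel \<rho> (a # as) w z * f w)"
    by (rule sum.cong) (auto simp: invQstar_solves_kernel_def[abs_def] mult.commute)
  finally show ?case .
qed

lemma invQstar_solves_has_sum: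
  "((\<lambda>w. invQstar_solves_kernel \<rho> as w z * f w) has_sum invQstar_solves \<rho> as f z) UNIV"
proof -
  obtain R where R: "insert z (set as) \<subseteq> {-R..R}"
    using finite_int_subset_interval[of "insert z (set as)"] by auto
  have "invQstar_solves_kernel \<rho> as w z = 0" if "w \<notin> {-R..R}" for w
  proof -
    have "invQstar_solves_kernel \<rho> as w z
        = (\<Sum>u\<in>{-R..R}. invQstar_solves_kernel \<rho> as u z * (if u = w then 1 else 0))"
      unfolding invQstar_solves_kernel_def[of \<rho> as w z] using R
      by (intro invQstar_solves_eq_sum) auto
    also have "\<dots> = 0" using that by (intro sum.neutral) auto
    finally show ?thesis .
  qed
  moreover have "invQstar_solves \<rho> as f z = (\<Sum>w\<in>{-R..R}. invQstar_solves_kernel \<rho> as w z * f w)"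
    using R by (intro invQstar_solves_eq_sum) auto
  ultimately show ?thesis
    by (intro has_sum_finite_neutralI[where B = "{-R..R}"]) auto
qed

lemma Qpow_eq_0_if_less: "u < y \<Longrightarrow> Qpow \<rho> j u y = 0"
proof (induction j arbitrary: u)
  case (Suc j)
  then have "(\<lambda>w. Qk \<rho> u w * Qpow \<rho> j w y) = (\<lambda>_. 0)"
    by (auto simp: Qk_def)
  then show ?case by simp
qed simp

lemma Qpow_Suc_eq_sum:
  assumes "{y..w} \<subseteq> S" "finite S"
  shows "Qpow \<rho> (Suc j) w y = (\<Sum>u\<in>S. Qk \<rho> w u * Qpow \<rho> j u y)"
proof -
  have "Qpow \<rho> (Suc j) w y = (\<Sum>\<^sub>\<infinity>u\<in>S. Qk \<rho> w u * Qpow \<rho> j u y)"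
  proof (simp, rule infsum_cong_neutral)
    fix u assume "u \<in> UNIV - S"
    then have "u \<notin> {y..w}" using assms(1) by blast
    then show "Qk \<rho> w u * Qpow \<rho> j u y = 0"
      by (auto simp: Qk_def Qpow_eq_0_if_less)
  qed auto
  then show ?thesis using assms(2) by simp
qed

lemma Qpow_1: "Qpow \<rho> (Suc 0) w y = Qk \<rho> w y"
proof -
  have "Qpow \<rho> (Suc 0) w y = (\<Sum>u\<in>insert y {y..w}. Qk \<rho> w u * Qpow \<rho> 0 u y)"
    by (rule Qpow_Suc_eq_sum) auto
  then show ?thesis by (simp add: if_distrib sum.delta cong: if_cong)
qed

lemma invQstar_solve_delta:
  assumes "0 < \<rho>" "\<rho> < 1"
  shows "invQstar_solve \<rho> a (\<lambda>v. if v = w then 1 else 0) u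
       = Qk \<rho> w u - (1 - \<rho>) / \<rho> * Qk \<rho> w a * Qext \<rho> a u"
proof -
  have lhs: "invQstar_solve \<rho> a (\<lambda>v. if v = w then 1 else 0) u
       = \<rho> * (1 - \<rho>) powi (w - u - 1)
         * ((if u < w \<and> w \<le> a then 1 else 0) - (if a < w \<and> w \<le> u then 1 else 0))"
    unfolding invQstar_solve_def by (simp add: if_distrib algebra_simps cong: if_cong)
  have Qk_powi: "Qk \<rho> w y = (if y < w then \<rho> * (1 - \<rho>) powi (w - y - 1) else 0)" for y
    unfolding Qk_def by (auto simp: power_int_def)
  have "(1 - \<rho>) powi (w - a - 1) * (1 - \<rho>) powi (a - u - 1)
      = (1 - \<rho>) powi ((w - a - 1) + (a - u - 1))"
    by (rule power_int_add[symmetric]) (use assms in simp)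
  also have "(w - a - 1) + (a - u - 1) = (w - u - 1) - 1" by simp
  finally have powi_sum: "(1 - \<rho>) * (1 - \<rho>) powi (w - a - 1) * (1 - \<rho>) powi (a - u - 1)
      = (1 - \<rho>) powi (w - u - 1)"
    using assms power_int_add_1'[of "1 - \<rho>" "w - u - 1 - 1"] by (simp add: mult.assoc)
  have "(1 - \<rho>) / \<rho> * (\<rho> * (1 - \<rho>) powi (w - a - 1)) * Qext \<rho> a u
      = \<rho> * ((1 - \<rho>) * (1 - \<rho>) powi (w - a - 1) * (1 - \<rho>) powi (a - u - 1))"
    using assms unfolding Qext_def by (simp add: field_simps)
  also have "\<dots> = \<rho> * (1 - \<rho>) powi (w - u - 1)"
    unfolding powi_sum ..
  finally show ?thesis
    unfolding lhs Qk_powi by auto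
qed

lemma invQstar_solves_kernel_snoc:
  assumes "0 < \<rho>" "\<rho> < 1" "set as \<subseteq> {-R..R}" "z \<in> {-R..R}"
  shows "invQstar_solves_kernel \<rho> (as @ [a]) w z
       = (\<Sum>u\<in>{-R..R}. Qk \<rho> w u * invQstar_solves_kernel \<rho> as u z)
         - (1 - \<rho>) / \<rho> * Qk \<rho> w a * invQstar_solves \<rho> as (Qext \<rho> a) z"
proof -
  have delta: "invQstar_solve \<rho> a (\<lambda>v. if v = w then 1 else 0)
      = (\<lambda>u. Qk \<rho> w u - (1 - \<rho>) / \<rho> * Qk \<rho> w a * Qext \<rho> a u)"
    using invQstar_solve_delta[OF assms(1,2)] by (rule ext)
  have "invQstar_solves_kernel \<rho> (as @ [a]) w z
      = invQstar_solves \<rho> as (\<lambda>u. Qk \<rho> w u - (1 - \<rho>) / \<rho> * Qk \<rho> w a * Qext \<rho> a u) z"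
    unfolding invQstar_solves_kernel_def invQstar_solves_append by (simp add: delta)
  also have "\<dots> = invQstar_solves \<rho> as (Qk \<rho> w) z
      - (1 - \<rho>) / \<rho> * Qk \<rho> w a * invQstar_solves \<rho> as (Qext \<rho> a) z"
    by (rule invQstar_solves_diff)
  also have "invQstar_solves \<rho> as (Qk \<rho> w) z
      = (\<Sum>u\<in>{-R..R}. Qk \<rho> w u * invQstar_solves_kernel \<rho> as u z)"
    using invQstar_solves_eq_sum[OF assms(3,4)] by (simp add: mult.commute)
  finally show ?thesis .
qed

lemma anchors_Suc:
  "k \<le> m \<Longrightarrow> anchors (Suc m) Y k = anchors m (\<lambda>i. Y (Suc i)) k"
  unfolding anchors_def by (intro map_cong) (auto simp: Suc_diff_le)

lemma anchors_Suc_self: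
  "anchors (Suc m) Y (Suc m) = anchors m (\<lambda>i. Y (Suc i)) m @ [Y 1]"
  using anchors_Suc[of m m Y] by (simp add: anchors_def)

lemma anchors_add:
  "anchors (N1 + N2) Y (k + N2) = anchors N2 (\<lambda>i. Y (N1 + i)) N2 @ anchors N1 Y k"
proof -
  have "[0..<k + N2] = [0..<N2] @ [N2..<N2 + k]"
    using upt_add_eq_append[of 0 N2 k] by (simp add: add.commute)
  moreover have "map (\<lambda>i. Y (N1 + N2 - i)) [N2..<N2 + k] = anchors N1 Y k"
    unfolding anchors_def by (rule nth_equalityI) auto
  ultimately show ?thesis
    unfolding anchors_def by (auto intro: map_cong)
qed

lemma hfun_0_Suc:
  assumes "0 < \<rho>" "\<rho> < 1" "k \<le> m"
  shows "hfun \<rho> (Suc m) Y k 0 = hfun \<rho> m (\<lambda>i. Y (Suc i)) k 0"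
  using assms by (simp add: hfun_0_eq anchors_Suc Suc_diff_le)

lemma Gfun_Suc:
  assumes "0 < \<rho>" "\<rho> < 1" "w \<in> {-R..R}" "Y ` {1..Suc m} \<subseteq> {-R..R}"
  shows "Gfun \<rho> Y (Suc m) w z
       = (\<Sum>u\<in>{-R..R}. Qk \<rho> w u * Gfun \<rho> (\<lambda>i. Y (Suc i)) m u z)
         + (1 - \<rho>) / \<rho> * Qk \<rho> w (Y 1) * hfun \<rho> (Suc m) Y m 0 z"
proof -
  define c where "c = (1 - \<rho>) / \<rho>"
  have "(\<Sum>u\<in>{-R..R}. Qk \<rho> w u * Gfun \<rho> (\<lambda>i. Y (Suc i)) m u z)
      = (\<Sum>k<m. c * (\<Sum>u\<in>{-R..R}. Qk \<rho> w u * Qpow \<rho> (m - k) u (Y (Suc (m - k))))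
                  * hfun \<rho> m (\<lambda>i. Y (Suc i)) k 0 z)"
    unfolding Gfun_def c_def sum_distrib_left sum_distrib_right
    by (subst sum.swap) (simp add: mult_ac)
  also have "\<dots> = (\<Sum>k<m. c * Qpow \<rho> (Suc m - k) w (Y (Suc m - k)) * hfun \<rho> (Suc m) Y k 0 z)"
  proof (rule sum.cong[OF refl])
    fix k assume "k \<in> {..<m}"
    then have k: "Suc m - k = Suc (m - k)" "Suc (m - k) \<in> {1..Suc m}" "k \<le> m"
      by auto
    have "Y (Suc (m - k)) \<in> {-R..R}" using k(2) assms(4) by blast
    then have "(\<Sum>u\<in>{-R..R}. Qk \<rho> w u * Qpow \<rho> (m - k) u (Y (Suc (m - k))))
        = Qpow \<rho> (Suc m - k) w (Y (Suc m - k))"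
      unfolding k(1) using assms(3)
      by (intro Qpow_Suc_eq_sum[symmetric]) auto
    then show "c * (\<Sum>u\<in>{-R..R}. Qk \<rho> w u * Qpow \<rho> (m - k) u (Y (Suc (m - k))))
                 * hfun \<rho> m (\<lambda>i. Y (Suc i)) k 0 z
             = c * Qpow \<rho> (Suc m - k) w (Y (Suc m - k)) * hfun \<rho> (Suc m) Y k 0 z"
      using hfun_0_Suc[OF assms(1,2) k(3)] by simp
  qed
  finally show ?thesis
    unfolding Gfun_def c_def by (simp del: Qpow.simps add: Qpow_1)
qed

lemma invQstar_solves_kernel_anchors:
  assumes "0 < \<rho>" "\<rho> < 1"
  shows "invQstar_solves_kernel \<rho> (anchors m Y m) w z = Qpow \<rho> m w z - Gfun \<rho> Y m w z"
proof (induction m arbitrary: Y w z)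
  case 0
  then show ?case by (simp add: invQstar_solves_kernel_def anchors_def Gfun_def)
next
  case (Suc m)
  define Y' where "Y' i = Y (Suc i)" for i
  define as where "as = anchors m Y' m"
  obtain R where R: "insert w (insert z (set as \<union> Y ` {1..Suc m})) \<subseteq> {-R..R}"
    using finite_int_subset_interval[of "insert w (insert z (set as \<union> Y ` {1..Suc m}))"] by auto
  have "invQstar_solves_kernel \<rho> (anchors (Suc m) Y (Suc m)) w z
      = (\<Sum>u\<in>{-R..R}. Qk \<rho> w u * invQstar_solves_kernel \<rho> as u z)
        - (1 - \<rho>) / \<rho> * Qk \<rho> w (Y 1) * invQstar_solves \<rho> as (Qext \<rho> (Y 1)) z"
    unfolding anchors_Suc_self Y'_def[symmetric] as_def[symmetric]
    using R by (intro invQstar_solves_kernel_snoc assms) auto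
  also have "(\<Sum>u\<in>{-R..R}. Qk \<rho> w u * invQstar_solves_kernel \<rho> as u z)
      = (\<Sum>u\<in>{-R..R}. Qk \<rho> w u * Qpow \<rho> m u z) - (\<Sum>u\<in>{-R..R}. Qk \<rho> w u * Gfun \<rho> Y' m u z)"
    unfolding as_def Suc.IH by (simp add: right_diff_distrib sum_subtractf)
  also have "(\<Sum>u\<in>{-R..R}. Qk \<rho> w u * Qpow \<rho> m u z) = Qpow \<rho> (Suc m) w z"
    using R by (intro Qpow_Suc_eq_sum[symmetric]) auto
  also have "invQstar_solves \<rho> as (Qext \<rho> (Y 1)) z = hfun \<rho> (Suc m) Y m 0 z"
    unfolding as_def Y'_def hfun_0_eq[OF assms] by (simp add: anchors_Suc)
  finally show ?case
    using Gfun_Suc[OF assms, of w R Y m z] R unfolding Y'_def by auto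
qed

theorem lemma2p5:
  fixes \<rho> :: real and N1 N2 k :: nat and X0 :: "nat \<Rightarrow> int" and z :: int
  assumes "0 < \<rho>" and "\<rho> < 1"
    and "1 \<le> N1" and "1 \<le> N2"
    and "\<And>i j. 1 \<le> i \<Longrightarrow> i < j \<Longrightarrow> j \<le> N1 + N2 \<Longrightarrow> X0 j < X0 i"
    and "k < N1"
  shows "((\<lambda>z3. (Qpow \<rho> N2 z3 z - Gfun \<rho> (\<lambda>i. X0 (N1 + i)) N2 z3 z)
                 * hfun \<rho> N1 (\<lambda>i. if i \<le> N1 then X0 i else 0) k 0 z3)
          has_sum hfun \<rho> (N1 + N2) X0 (k + N2) 0 z) UNIV"
proof -
  define Y1 where "Y1 = (\<lambda>i. if i \<le> N1 then X0 i else 0)"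
  define Y2 where "Y2 = (\<lambda>i. X0 (N1 + i))"
  have "anchors N1 Y1 k = anchors N1 X0 k"
    unfolding anchors_def Y1_def by simp
  then have "hfun \<rho> (N1 + N2) X0 (k + N2) 0
      = invQstar_solves \<rho> (anchors N2 Y2 N2) (hfun \<rho> N1 Y1 k 0)"
    using assms(1,2)
    by (simp add: hfun_0_eq anchors_add invQstar_solves_append Y1_def Y2_def)
  moreover have "invQstar_solves_kernel \<rho> (anchors N2 Y2 N2) w z
      = Qpow \<rho> N2 w z - Gfun \<rho> Y2 N2 w z" for w
    using assms(1,2) by (rule invQstar_solves_kernel_anchors)
  ultimately show ?thesis
    using invQstar_solves_has_sum[of \<rho> "anchors N2 Y2 N2" z "hfun \<rho> N1 Y1 k 0"]
    unfolding Y1_def Y2_def by simp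
qed

end
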